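(* Let $A=(a_{ij})\in\mathcal{B}^{m,n}$ and let $k$ be a field. Let $k[A]=k[x_{ij} : a_{ij}=1]$ and let $A[x]$ be the $m\times n$ matrix over $k[A]$ with $A[x]_{ij}=x_{ij}$ if $a_{ij}=1$ and $A[x]_{ij}=0$ if $a_{ij}=0$. Let $I_2(A)\subseteq k[A]$ be the ideal generated by all $2\times 2$ minors of $A[x]$. Then for entries $a_{ij}=a_{k\ell}=1$, the pair $\{a_{ij},a_{k\ell}\}$ is an isolated pair if and only if $x_{ij}x_{k\ell}\in I_2(A)$.
   Context: $\mathcal{B}^{m,n}$ denotes $m\times n$ matrices with entries in the Boolean semiring $\{0,1\}$ with $\vee$ (or), $\wedge$ (and). A pair of entries $\{a_{ij},a_{k\ell}\}$ of $A$ is called isolated if $a_{ij}=a_{k\ell}=1$ and $a_{i\ell}\wedge a_{kj}=0$. *)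

theory Defs
  imports Main "HOL-Library.Poly_Mapping"
begin

text \<open>Multivariate polynomials over a field k in the variables x_(i,j), represented as
  finitely supported maps from monomials (finitely supported exponent vectors) to coefficients.\<close>
type_synonym 'k mpoly = "((nat \<times> nat) \<Rightarrow>\<^sub>0 nat) \<Rightarrow>\<^sub>0 'k"

definition Var :: "nat \<times> nat \<Rightarrow> 'k::comm_ring_1 mpoly" where
  "Var v = Poly_Mapping.single (Poly_Mapping.single v 1) 1"

text \<open>Boolean m x n matrices: A i j for i < m, j < n (True = 1, False = 0).\<close>
definition isolated_pair :: "(nat \<Rightarrow> nat \<Rightarrow> bool) \<Rightarrow> nat \<Rightarrow> nat \<Rightarrow> nat \<Rightarrow> nat \<Rightarrow> bool" where
  "isolated_pair A i j k l \<longleftrightarrow> A i j \<and> A k l \<and> \<not> (A i l \<and> A k j)"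

definition kA :: "nat \<Rightarrow> nat \<Rightarrow> (nat \<Rightarrow> nat \<Rightarrow> bool) \<Rightarrow> 'k::field mpoly set" where
  "kA m n A = {p. \<forall>mo \<in> Poly_Mapping.keys p. \<forall>v \<in> Poly_Mapping.keys mo.
                    fst v < m \<and> snd v < n \<and> A (fst v) (snd v)}"

definition Ax :: "(nat \<Rightarrow> nat \<Rightarrow> bool) \<Rightarrow> nat \<Rightarrow> nat \<Rightarrow> 'k::field mpoly" where
  "Ax A i j = (if A i j then Var (i, j) else 0)"

definition minors2 :: "nat \<Rightarrow> nat \<Rightarrow> (nat \<Rightarrow> nat \<Rightarrow> bool) \<Rightarrow> 'k::field mpoly set" where
  "minors2 m n A = {Ax A i j * Ax A k l - Ax A i l * Ax A k j | i j k l.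
                      i < k \<and> k < m \<and> j < l \<and> l < n}"

definition ideal_in :: "'a::comm_ring_1 set \<Rightarrow> 'a set \<Rightarrow> 'a set" where
  "ideal_in R G = {\<Sum>g\<in>F. c g * g | F c. finite F \<and> F \<subseteq> G \<and> (\<forall>g\<in>F. c g \<in> R)}"

definition I2 :: "nat \<Rightarrow> nat \<Rightarrow> (nat \<Rightarrow> nat \<Rightarrow> bool) \<Rightarrow> 'k::field mpoly set" where
  "I2 m n A = ideal_in (kA m n A) (minors2 m n A)"

end

theory Submission
  imports Defs
begin

text \<open>If the pair is isolated, the second term of the 2-minor on rows i, k and columns j, l
  vanishes, so that minor is \<open>\<plusminus>x\<^sub>i\<^sub>j x\<^sub>k\<^sub>l\<close>. Conversely, if also
  \<open>a\<^sub>i\<^sub>l = a\<^sub>k\<^sub>j = 1\<close>, take the linear functional summing the coefficients of the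
  monomials \<open>x\<^sub>i\<^sub>j x\<^sub>k\<^sub>l\<close> and \<open>x\<^sub>i\<^sub>l x\<^sub>k\<^sub>j\<close> (one monomial if i = k or j = l).
  As minors are quadratic forms, on a multiple \<open>q g\<close> of a minor it only sees the constant
  term of q times the coefficients of g, and every minor contains either both monomials with
  opposite signs or neither. So the functional vanishes on \<open>I\<^sub>2(A)\<close>, but it is 1 on
  \<open>x\<^sub>i\<^sub>j x\<^sub>k\<^sub>l\<close>.\<close>

definition quad_monom :: "'a \<Rightarrow> 'a \<Rightarrow> 'a \<Rightarrow>\<^sub>0 nat" where
  "quad_monom a b = Poly_Mapping.single a 1 + Poly_Mapping.single b 1"

lemma lookup_quad_monom:
  "Poly_Mapping.lookup (quad_monom a b) x = (if x = a then 1 else 0) + (if x = b then 1 else 0)"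
  by (simp add: quad_monom_def lookup_add lookup_single when_def)

lemma quad_monom_eq_iff:
  "quad_monom a b = quad_monom p q \<longleftrightarrow> (a = p \<and> b = q) \<or> (a = q \<and> b = p)"
proof
  assume "quad_monom a b = quad_monom p q"
  then have eq: "Poly_Mapping.lookup (quad_monom a b) x = Poly_Mapping.lookup (quad_monom p q) x" for x
    by simp
  have "a = p \<or> a = q"
    using eq[of a] by (simp add: lookup_quad_monom split: if_split_asm)
  then show "(a = p \<and> b = q) \<or> (a = q \<and> b = p)"
    using eq[of b] by (auto simp: lookup_quad_monom split: if_split_asm)
qed (auto simp: quad_monom_def add.commute)

definition total_degree :: "('a \<Rightarrow>\<^sub>0 nat) \<Rightarrow> nat" where
  "total_degree s = (\<Sum>x\<in>Poly_Mapping.keys s. Poly_Mapping.lookup s x)"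

lemma total_degree_add: "total_degree (s + t) = total_degree s + total_degree t"
  unfolding total_degree_def by (rule setsum_keys_plus_distrib) auto

lemma total_degree_single [simp]: "total_degree (Poly_Mapping.single a n) = n"
  by (simp add: total_degree_def)

lemma total_degree_eq_0_iff [simp]: "total_degree s = 0 \<longleftrightarrow> s = 0"
  by (auto simp: total_degree_def in_keys_iff intro: poly_mapping_eqI)

lemma total_degree_quad_monom [simp]: "total_degree (quad_monom a b) = 2"
  by (simp add: quad_monom_def total_degree_add)

lemma add_eq_same_degree_imp_zero:
  assumes "l + s = t" "total_degree s = total_degree t"
  shows "l = 0"
  using assms by (metis add_cancel_right_left total_degree_add total_degree_eq_0_iff)

lemma lookup_mult_single_same_degree:
  fixes c :: "('a \<Rightarrow>\<^sub>0 nat) \<Rightarrow>\<^sub>0 'k::comm_semiring_1"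
  assumes "total_degree s = total_degree t"
  shows "Poly_Mapping.lookup (c * Poly_Mapping.single s r) t =
           (if s = t then Poly_Mapping.lookup c 0 * r else 0)"
proof -
  have "Poly_Mapping.lookup (c * Poly_Mapping.single s r) t =
          (\<Sum>l. Poly_Mapping.lookup c l * (\<Sum>q. (r when t = l + q) when s = q))"
    by (simp only: lookup_mult lookup_single when_when conj_commute)
  also have "\<dots> = (\<Sum>l. (Poly_Mapping.lookup c l * r when s = t) when l = 0)"
    using add_eq_same_degree_imp_zero[OF _ assms] by (intro Sum_any.cong) (auto simp: when_def)
  also have "\<dots> = (if s = t then Poly_Mapping.lookup c 0 * r else 0)"
    by (simp add: when_def)
  finally show ?thesis .
qed

lemma Var_mult_Var: "(Var a * Var b :: 'k::comm_ring_1 mpoly) = Poly_Mapping.single (quad_monom a b) 1"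
  by (simp add: Var_def mult_single quad_monom_def)

lemma mult_mem_ideal_in: "c \<in> R \<Longrightarrow> g \<in> G \<Longrightarrow> c * g \<in> ideal_in R G"
  unfolding ideal_in_def by (intro CollectI exI[of _ "{g}"] exI[of _ "\<lambda>_. c"]) simp

lemma zero_mem_ideal_in: "0 \<in> ideal_in R G"
  unfolding ideal_in_def by (intro CollectI exI[of _ "{}"]) simp

lemma additive_vanishes_on_ideal_in:
  fixes \<phi> :: "'a::comm_ring_1 \<Rightarrow> 'b::comm_monoid_add"
  assumes "x \<in> ideal_in R G"
    and "\<phi> 0 = 0" "\<And>x y. \<phi> (x + y) = \<phi> x + \<phi> y"
    and "\<And>c g. c \<in> R \<Longrightarrow> g \<in> G \<Longrightarrow> \<phi> (c * g) = 0"
  shows "\<phi> x = 0"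
proof -
  obtain F c where x: "x = (\<Sum>g\<in>F. c g * g)" and F: "F \<subseteq> G" "\<forall>g\<in>F. c g \<in> R"
    using assms(1) unfolding ideal_in_def by blast
  have "\<phi> x = (\<Sum>g\<in>F. \<phi> (c g * g))"
    unfolding x using sum_comp_morphism[of \<phi> "\<lambda>g. c g * g" F, OF assms(2,3)] by (simp add: o_def)
  also have "\<dots> = 0"
    using F assms(4) by (intro sum.neutral) blast
  finally show ?thesis .
qed

definition minor2 :: "(nat \<Rightarrow> nat \<Rightarrow> bool) \<Rightarrow> nat \<Rightarrow> nat \<Rightarrow> nat \<Rightarrow> nat \<Rightarrow> 'k::field mpoly" where
  "minor2 A i j k l = Ax A i j * Ax A k l - Ax A i l * Ax A k j"

lemma minor2_swap_rows: "minor2 A k j i l = - minor2 A i j k l"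
  by (simp add: minor2_def mult.commute)

lemma minor2_swap_cols: "minor2 A i l k j = - minor2 A i j k l"
  by (simp add: minor2_def)

lemma minor2_same_row: "minor2 A i j i l = 0"
  by (simp add: minor2_def mult.commute)

lemma minor2_same_col: "minor2 A i j k j = 0"
  by (simp add: minor2_def)

lemma minor2_mem_minors2: "i < k \<Longrightarrow> k < m \<Longrightarrow> j < l \<Longrightarrow> l < n \<Longrightarrow> minor2 A i j k l \<in> minors2 m n A"
  unfolding minors2_def minor2_def by blast

lemma minor2_mem_I2:
  assumes "i < m" "k < m" "j < n" "l < n"
  shows "(minor2 A i j k l :: 'k::field mpoly) \<in> I2 m n A"
proof -
  have unit: "(1 :: 'k mpoly) \<in> kA m n A" "(- 1 :: 'k mpoly) \<in> kA m n A"
    by (auto simp: kA_def)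
  consider "i = k \<or> j = l" | "(minor2 A i j k l :: 'k mpoly) \<in> minors2 m n A"
    | "- (minor2 A i j k l :: 'k mpoly) \<in> minors2 m n A"
    using assms minor2_mem_minors2[of i k m j l n A] minor2_mem_minors2[of k i m j l n A]
      minor2_mem_minors2[of i k m l j n A] minor2_mem_minors2[of k i m l j n A]
    by (metis linorder_neqE_nat minor2_swap_cols minor2_swap_rows minus_minus)
  then show ?thesis
  proof cases
    case 1
    then show ?thesis by (auto simp: minor2_same_row minor2_same_col I2_def zero_mem_ideal_in)
  next
    case 2
    then show ?thesis using mult_mem_ideal_in[OF unit(1)] by (fastforce simp: I2_def)
  next
    case 3
    then show ?thesis using mult_mem_ideal_in[OF unit(2)] by (fastforce simp: I2_def)
  qed
qed

lemma minor2_isolated_pair: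
  "isolated_pair A i j k l \<Longrightarrow> minor2 A i j k l = Var (i, j) * Var (k, l)"
  by (auto simp: isolated_pair_def minor2_def Ax_def)

lemma Ax_mult_Ax:
  "(Ax A a b * Ax A c d :: 'k::field mpoly) =
     (if A a b \<and> A c d then Poly_Mapping.single (quad_monom (a, b) (c, d)) 1 else 0)"
  by (simp add: Ax_def Var_mult_Var)

lemma sum_lookup_mult_single_same_degree:
  fixes c :: "('a \<Rightarrow>\<^sub>0 nat) \<Rightarrow>\<^sub>0 'k::comm_semiring_1"
  assumes "finite S" "\<forall>t\<in>S. total_degree t = total_degree s"
  shows "(\<Sum>t\<in>S. Poly_Mapping.lookup (c * Poly_Mapping.single s r) t) =
           (if s \<in> S then Poly_Mapping.lookup c 0 * r else 0)"
  using assms by (simp add: lookup_mult_single_same_degree sum.delta)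

lemma sum_lookup_mult_minor2:
  fixes q :: "'k::field mpoly"
  assumes "finite S" "\<forall>M\<in>S. total_degree M = 2"
  shows "(\<Sum>M\<in>S. Poly_Mapping.lookup (q * minor2 A a b c d) M) = Poly_Mapping.lookup q 0 *
           ((if A a b \<and> A c d \<and> quad_monom (a, b) (c, d) \<in> S then 1 else 0)
            - (if A a d \<and> A c b \<and> quad_monom (a, d) (c, b) \<in> S then 1 else 0))"
  using assms
  by (simp add: minor2_def Ax_mult_Ax right_diff_distrib lookup_minus sum_subtractf
      sum_lookup_mult_single_same_degree)

definition minor_monomials :: "nat \<Rightarrow> nat \<Rightarrow> nat \<Rightarrow> nat \<Rightarrow> ((nat \<times> nat) \<Rightarrow>\<^sub>0 nat) set" where
  "minor_monomials i j k l = {quad_monom (i, j) (k, l), quad_monom (i, l) (k, j)}"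

lemma minor_monomials_swap_cols:
  "quad_monom (a, d) (c, b) \<in> minor_monomials i j k l \<longleftrightarrow>
     quad_monom (a, b) (c, d) \<in> minor_monomials i j k l"
  by (auto simp: minor_monomials_def quad_monom_eq_iff)

lemma minor_monomials_corners:
  "quad_monom (a, b) (c, d) \<in> minor_monomials i j k l \<Longrightarrow>
     {(a, b), (c, d)} \<subseteq> {(i, j), (k, l), (i, l), (k, j)}"
  by (auto simp: minor_monomials_def quad_monom_eq_iff)

lemma sum_minor_monomials_mult_minor2:
  fixes q :: "'k::field mpoly"
  assumes "A i j" "A k l" "A i l" "A k j"
  shows "(\<Sum>M\<in>minor_monomials i j k l. Poly_Mapping.lookup (q * minor2 A a b c d) M) = 0"
proof -
  let ?S = "minor_monomials i j k l"
  have "(\<Sum>M\<in>?S. Poly_Mapping.lookup (q * minor2 A a b c d) M) = Poly_Mapping.lookup q 0 *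
           ((if A a b \<and> A c d \<and> quad_monom (a, b) (c, d) \<in> ?S then 1 else 0)
            - (if A a d \<and> A c b \<and> quad_monom (a, d) (c, b) \<in> ?S then 1 else 0))"
    by (rule sum_lookup_mult_minor2) (auto simp: minor_monomials_def)
  also have "\<dots> = 0"
    using minor_monomials_corners[of a b c d i j k l] minor_monomials_corners[of a d c b i j k l]
      minor_monomials_swap_cols[of a d c b i j k l] assms
    by auto
  finally show ?thesis .
qed

lemma Var_mult_Var_notin_I2:
  assumes "A i j" "A k l" "A i l" "A k j"
  shows "(Var (i, j) * Var (k, l) :: 'k::field mpoly) \<notin> I2 m n A"
proof
  let ?\<phi> = "\<lambda>p :: 'k mpoly. \<Sum>M\<in>minor_monomials i j k l. Poly_Mapping.lookup p M"
  assume "(Var (i, j) * Var (k, l) :: 'k mpoly) \<in> I2 m n A"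
  then have "?\<phi> (Var (i, j) * Var (k, l)) = 0"
    unfolding I2_def
  proof (rule additive_vanishes_on_ideal_in)
    fix c g :: "'k mpoly"
    assume "g \<in> minors2 m n A"
    then obtain a b c' d where "g = minor2 A a b c' d"
      unfolding minors2_def minor2_def by blast
    then show "?\<phi> (c * g) = 0"
      using sum_minor_monomials_mult_minor2[OF assms] by simp
  qed (simp_all add: lookup_add sum.distrib)
  moreover have "?\<phi> (Var (i, j) * Var (k, l)) = 1"
    by (simp add: Var_mult_Var minor_monomials_def lookup_single when_def sum.delta)
  ultimately show False
    by simp
qed

theorem lemma4p12:
  fixes A :: "nat \<Rightarrow> nat \<Rightarrow> bool" and m n i j k l :: nat
  assumes "i < m" "k < m" "j < n" "l < n"
      and "A i j" "A k l"
  shows "isolated_pair A i j k l \<longleftrightarrow>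
           (Var (i, j) * Var (k, l) :: 'k::field mpoly) \<in> I2 m n A"
proof
  assume "isolated_pair A i j k l"
  then have "minor2 A i j k l = (Var (i, j) * Var (k, l) :: 'k mpoly)"
    by (rule minor2_isolated_pair)
  moreover have "(minor2 A i j k l :: 'k mpoly) \<in> I2 m n A"
    using assms(1-4) by (rule minor2_mem_I2)
  ultimately show "(Var (i, j) * Var (k, l) :: 'k mpoly) \<in> I2 m n A"
    by simp
next
  assume "(Var (i, j) * Var (k, l) :: 'k mpoly) \<in> I2 m n A"
  with Var_mult_Var_notin_I2[of A i j k l m n] show "isolated_pair A i j k l"
    using assms(5,6) unfolding isolated_pair_def by blast
qed

end
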